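(* Let $\mathcal{A}$ be an $\ell_A$-quasi-cyclic code over $\mathbb{F}_q$ of length $n_A=\ell_A m_A$ and $\mathcal{B}$ an $\ell_B$-quasi-cyclic code over $\mathbb{F}_q$ of length $n_B=\ell_B m_B$, with $\gcd(n_A,n_B)=1$, and let integers $a,b$ satisfy $a n_A+b n_B=1$. Put $\ell=\ell_A\ell_B$, $m=m_Am_B$, $n=n_An_B$. Let $(m_{i,j})_{0\le i<n_B,\,0\le j<n_A}$ be an $n_B\times n_A$ matrix over $\mathbb{F}_q$ each of whose rows is in $\mathcal{A}$ and each of whose columns is in $\mathcal{B}$, and let $$c(X)\equiv\sum_{i=0}^{n_B-1}\sum_{j=0}^{n_A-1}m_{i,j}X^{\psi(i,j)}\pmod{X^n-1},\qquad \psi(i,j)=i a n_A\ell_A+j b n_B\ell_B \bmod n.$$ For $g\in\{0,\dots,\ell_B-1\}$, $h\in\{0,\dots,\ell_A-1\}$ define $$c_{g,h}(X)\equiv X^{\theta(g,h)}\sum_{i=0}^{m_B-1}\sum_{j=0}^{m_A-1}m_{i\ell_B+g,\,j\ell_A+h}X^{\chi(i,j)}\pmod{X^m-1},$$ where $\theta(g,h)=g(-b m_B)+h(-a m_A)\bmod m$ and $\chi(i,j)=i a n_A+j b n_B\bmod m$. Then $$c(X)\equiv\sum_{g=0}^{\ell_B-1}\sum_{h=0}^{\ell_A-1}c_{g,h}(X^{\ell_A\ell_B})X^{g\ell_A+h\ell_B}\pmod{X^n-1}.$$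
   Context: An $\ell$-quasi-cyclic code of length $\ell m$ over $\mathbb{F}_q$ is a linear code closed under cyclic shift of coordinates by $\ell$ positions. Exponents of $X$ are taken modulo the indicated modulus (so $X^{k}$ for negative $k$ means $X^{k\bmod m}$ modulo $X^m-1$, resp. modulo $n$ for $X^n-1$). *)

theory Defs
  imports "HOL-Computational_Algebra.Polynomial"
begin

definition linear_code :: "nat \<Rightarrow> 'a::field list set \<Rightarrow> bool" where
  "linear_code N C \<longleftrightarrow>
     (\<forall>c\<in>C. length c = N) \<and> replicate N 0 \<in> C \<and>
     (\<forall>x\<in>C. \<forall>y\<in>C. map2 (+) x y \<in> C) \<and>
     (\<forall>k. \<forall>x\<in>C. map ((*) k) x \<in> C)"

definition quasi_cyclic :: "nat \<Rightarrow> nat \<Rightarrow> 'a::field list set \<Rightarrow> bool" where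
  "quasi_cyclic l m C \<longleftrightarrow> linear_code (l * m) C \<and> (\<forall>c\<in>C. rotate l c \<in> C)"

definition pcong_xn :: "nat \<Rightarrow> 'a::comm_ring_1 poly \<Rightarrow> 'a poly \<Rightarrow> bool" where
  "pcong_xn N p q \<longleftrightarrow> (monom 1 N - 1) dvd (p - q)"

end

theory Submission
  imports Defs
begin

text \<open>Split the row index as i = i' lB + g and the column index as j = j' lA + h. Since
  a nA + b nB = 1, the exponent \<psi>(i' lB + g, j' lA + h) equals
  (\<theta>(g,h) + \<chi>(i',j')) lA lB + g lA + h lB exactly as an integer, and reducing \<theta> and \<chi>
  modulo m changes this only by multiples of m lA lB = n. Hence both sides are the same sum of
  monomials, with exponents congruent modulo n.\<close>

lemma pcong_xn_sum:
  "(\<And>x. x \<in> S \<Longrightarrow> pcong_xn N (f x) (g x)) \<Longrightarrow> pcong_xn N (sum f S) (sum g S)"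
  unfolding pcong_xn_def by (simp add: dvd_sum flip: sum_subtractf)

lemma pcong_xn_monom_add_mult: "pcong_xn N (monom c (k + t * N)) (monom c k)"
proof -
  have "monom c (k + t * N) - monom c k = monom c k * (monom 1 N ^ t - 1)"
    by (simp add: mult_monom monom_power algebra_simps mult.commute)
  moreover have "(monom 1 N - 1) dvd (monom 1 N ^ t - (1 :: 'a poly))"
    by (simp add: power_diff_1_eq)
  ultimately show ?thesis
    unfolding pcong_xn_def by (metis dvd_mult)
qed

lemma pcong_xn_monom:
  assumes "k mod N = k' mod N"
  shows "pcong_xn N (monom c k) (monom c k')"
proof -
  have reduce: "pcong_xn N (monom c n) (monom c (n mod N))" for n
    using pcong_xn_monom_add_mult[of N c "n mod N" "n div N"] by simp
  have "(monom 1 N - 1) dvd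
      (monom c k - monom c (k mod N)) - (monom c k' - monom c (k' mod N))"
    using reduce[of k] reduce[of k'] unfolding pcong_xn_def by (rule dvd_diff)
  with assms show ?thesis
    unfolding pcong_xn_def by simp
qed

lemma pcompose_monom_monom:
  "pcompose (monom c e) (monom (1::'a::comm_ring_1) d) = monom c (e * d)"
proof -
  have pow: "pcompose ([:0, 1:] ^ e) q = q ^ e" for q :: "'a poly"
    by (induction e) (simp_all add: pcompose_mult pcompose_1 pcompose_pCons)
  have "pcompose (monom c e) (monom 1 d) = smult c (pcompose ([:0, 1:] ^ e) (monom 1 d))"
    by (simp add: monom_altdef pcompose_smult)
  also have "\<dots> = monom c (e * d)"
    by (simp add: pow monom_power smult_monom mult.commute)
  finally show ?thesis .
qed

lemma pcompose_monom_mult_double_sum: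
  fixes c :: "'i \<Rightarrow> 'j \<Rightarrow> 'a::comm_ring_1"
  shows "pcompose (monom 1 t * (\<Sum>x\<in>I. \<Sum>y\<in>J. monom (c x y) (e x y))) (monom 1 L) * monom 1 s
    = (\<Sum>x\<in>I. \<Sum>y\<in>J. monom (c x y) ((t + e x y) * L + s))"
  by (simp add: pcompose_mult pcompose_sum pcompose_monom_monom sum_distrib_left sum_distrib_right
      mult_monom add_mult_distrib)

lemma sum_lessThan_mult_residues:
  fixes l m :: nat
  shows "(\<Sum>k < l * m. f k) = (\<Sum>r < l. \<Sum>q < m. f (q * l + r))"
proof -
  have "(\<Sum>k < m * l. f k) = (\<Sum>q < m. sum f {q * l..<q * l + l})"
    using sum.nat_group[where g = f and k = l and n = m] by simp
  also have "\<dots> = (\<Sum>q < m. \<Sum>r < l. f (q * l + r))"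
    by (simp add: sum.shift_bounds_nat_ivl[of f 0 _ l, simplified] atLeast0LessThan add.commute)
  finally show ?thesis by (simp add: mult.commute sum.swap[of _ "{..<m}"])
qed

lemma bezout_exponent_split:
  fixes a b lA mA lB mB i j g h :: int
  assumes "a * (lA * mA) + b * (lB * mB) = 1"
  shows "(i * lB + g) * a * (lA * mA) * lA + (j * lA + h) * b * (lB * mB) * lB
       = ((g * (- b * mB) + h * (- a * mA)) + (i * a * (lA * mA) + j * b * (lB * mB))) * (lA * lB)
         + (g * lA + h * lB)"
proof -
  have "(i * lB + g) * a * (lA * mA) * lA + (j * lA + h) * b * (lB * mB) * lB
      = ((g * (- b * mB) + h * (- a * mA)) + (i * a * (lA * mA) + j * b * (lB * mB))) * (lA * lB)
         + (g * lA + h * lB) + (g * lA + h * lB) * (a * (lA * mA) + b * (lB * mB) - 1)"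
    by (simp add: algebra_simps)
  with assms show ?thesis by simp
qed

lemma mod_mult_add_mod_summands:
  fixes x y s m L :: int
  shows "((x + y) * L + s) mod (m * L) = ((x mod m + y mod m) * L + s) mod (m * L)"
proof -
  have "(x + y) * L mod (m * L) = (x mod m + y mod m) * L mod (m * L)"
    by (simp only: mod_mult_mult2 mod_add_eq)
  then show ?thesis
    by (rule mod_add_cong) (rule refl)
qed

lemma nat_mod_mult_add_mod_summands:
  fixes x y :: int and m L s :: nat
  assumes "0 < m" "0 < L"
  shows "nat (((x + y) * int L + int s) mod int (m * L)) mod (m * L)
       = ((nat (x mod int m) + nat (y mod int m)) * L + s) mod (m * L)"
proof -
  have "int (nat (((x + y) * int L + int s) mod int (m * L)) mod (m * L))
      = ((x + y) * int L + int s) mod int (m * L)"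
    using assms by (simp add: of_nat_mod)
  also have "\<dots> = ((x mod int m + y mod int m) * int L + int s) mod int (m * L)"
    unfolding of_nat_mult by (rule mod_mult_add_mod_summands)
  also have "\<dots> = int (((nat (x mod int m) + nat (y mod int m)) * L + s) mod (m * L))"
    using assms by (simp add: of_nat_mod)
  finally show ?thesis
    by (simp only: of_nat_eq_iff)
qed

theorem lemma4:
  fixes A B :: "'a::{field, finite} list set"
    and lA mA lB mB :: nat and a b :: int
    and M :: "nat \<Rightarrow> nat \<Rightarrow> 'a"
  assumes "0 < lA" "0 < mA" "0 < lB" "0 < mB"
    and "quasi_cyclic lA mA A" and "quasi_cyclic lB mB B"
    and "coprime (lA * mA) (lB * mB)"
    and "a * int (lA * mA) + b * int (lB * mB) = 1"
    and "\<forall>i < lB * mB. map (M i) [0..<lA * mA] \<in> A"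
    and "\<forall>j < lA * mA. map (\<lambda>i. M i j) [0..<lB * mB] \<in> B"
  shows "pcong_xn ((lA * mA) * (lB * mB))
     (\<Sum>i < lB * mB. \<Sum>j < lA * mA.
        monom (M i j)
          (nat ((int i * a * int (lA * mA) * int lA + int j * b * int (lB * mB) * int lB)
                mod int ((lA * mA) * (lB * mB)))))
     (\<Sum>g < lB. \<Sum>h < lA.
        pcompose
          (monom 1 (nat ((int g * (- b * int mB) + int h * (- a * int mA)) mod int (mA * mB)))
           * (\<Sum>i < mB. \<Sum>j < mA.
                monom (M (i * lB + g) (j * lA + h))
                  (nat ((int i * a * int (lA * mA) + int j * b * int (lB * mB)) mod int (mA * mB)))))
          (monom 1 (lA * lB))
        * monom 1 (g * lA + h * lB))"
proof -
  let ?n = "(lA * mA) * (lB * mB)"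
  let ?\<theta> = "\<lambda>g h. int g * (- b * int mB) + int h * (- a * int mA)"
  let ?\<chi> = "\<lambda>i j. int i * a * int (lA * mA) + int j * b * int (lB * mB)"
  let ?\<psi> = "\<lambda>i j. int i * a * int (lA * mA) * int lA + int j * b * int (lB * mB) * int lB"
  let ?e = "\<lambda>g h i j. (nat (?\<theta> g h mod int (mA * mB)) + nat (?\<chi> i j mod int (mA * mB))) * (lA * lB)
                      + (g * lA + h * lB)"
  have lhs: "(\<Sum>i < lB * mB. \<Sum>j < lA * mA. monom (M i j) (nat (?\<psi> i j mod int ?n)))
      = (\<Sum>g < lB. \<Sum>h < lA. \<Sum>i < mB. \<Sum>j < mA.
           monom (M (i * lB + g) (j * lA + h)) (nat (?\<psi> (i * lB + g) (j * lA + h) mod int ?n)))"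
    by (simp only: sum_lessThan_mult_residues sum.swap[of _ "{..<mB}" "{..<lA}"])
  have exponent: "nat (?\<psi> (i * lB + g) (j * lA + h) mod int ?n) mod ?n = ?e g h i j mod ?n"
    for g h i j
  proof -
    have "?\<psi> (i * lB + g) (j * lA + h) = (?\<theta> g h + ?\<chi> i j) * int (lA * lB) + int (g * lA + h * lB)"
      using bezout_exponent_split[of a "int lA" "int mA" b "int lB" "int mB" "int i" "int g" "int j" "int h"]
        assms(8) by (simp only: of_nat_add of_nat_mult)
    moreover have "?n = (mA * mB) * (lA * lB)" by simp
    ultimately show ?thesis
      using assms(1-4) by (simp only:) (rule nat_mod_mult_add_mod_summands, simp_all)
  qed
  show ?thesis
    unfolding lhs pcompose_monom_mult_double_sum by (intro pcong_xn_sum pcong_xn_monom exponent)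
qed

end
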